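(* Let $W=\mathfrak{S}_n$, $1\le c\le n-2$, and let $w_2\in\mathfrak{S}_n$ with $w_2^2=1$. Suppose $\ell(s_{c+1}s_cw_2s_c)=\ell(w_2)+3$, $s_cw_2\neq w_2s_c$, $s_{c+1}s_cw_2s_c=s_cw_2s_cs_{c+1}$ and $s_{c+1}w_2s_c<w_2s_c$. Then $s_{c+1}w_2<w_2$.
   Context: $s_j=(j,j+1)$; $\ell$ is the Coxeter length of $\mathfrak{S}_n$ and $<$ is the Bruhat order. *)

theory Defs
  imports "HOL-Combinatorics.Combinatorics"
begin

text \<open>Elements of the symmetric group S_n are permutations of {1..n};
  the group product u w is function composition u \<circ> w.\<close>

abbreviation sym_grp :: "nat \<Rightarrow> (nat \<Rightarrow> nat) set" where
  "sym_grp n \<equiv> {p. p permutes {1..n}}"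

definition s :: "nat \<Rightarrow> nat \<Rightarrow> nat" where
  "s j = Transposition.transpose j (j + 1)"

definition len :: "nat \<Rightarrow> (nat \<Rightarrow> nat) \<Rightarrow> nat" where
  "len n w = card {(i, j). i \<in> {1..n} \<and> j \<in> {1..n} \<and> i < j \<and> w j < w i}"

definition reflections :: "nat \<Rightarrow> (nat \<Rightarrow> nat) set" where
  "reflections n = {Transposition.transpose a b | a b. a \<in> {1..n} \<and> b \<in> {1..n} \<and> a \<noteq> b}"

definition bruhat_lt :: "nat \<Rightarrow> (nat \<Rightarrow> nat) \<Rightarrow> (nat \<Rightarrow> nat) \<Rightarrow> bool" where
  "bruhat_lt n u v \<longleftrightarrow>
     (u, v) \<in> {(w, w \<circ> t) | w t. w \<in> sym_grp n \<and> t \<in> reflections n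
                                   \<and> len n w < len n (w \<circ> t)}\<^sup>+"

end

theory Submission
  imports Defs
begin

text \<open>Since \<open>w\<^sub>2 s\<^sub>c\<close> has \<open>s\<^sub>c\<^sub>+\<^sub>1\<close> as a left descent, the value \<open>c+2\<close> occurs before
  \<open>c+1\<close> in it, i.e. \<open>s\<^sub>c(w\<^sub>2(c+2)) < s\<^sub>c(w\<^sub>2(c+1))\<close>. Removing \<open>s\<^sub>c\<close> preserves this
  order unless \<open>w\<^sub>2(c+2) = c+1\<close> and \<open>w\<^sub>2(c+1) = c\<close>, which is impossible for an
  involution. Hence \<open>w\<^sub>2(c+2) < w\<^sub>2(c+1)\<close>, so \<open>s\<^sub>c\<^sub>+\<^sub>1\<close> is a left descent of \<open>w\<^sub>2\<close>
  and \<open>s\<^sub>c\<^sub>+\<^sub>1 w\<^sub>2\<close> lies one Bruhat step below \<open>w\<^sub>2\<close>.\<close>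

lemma s_apply: "s k x = (if x = k then Suc k else if x = Suc k then k else x)"
  by (simp add: s_def Transposition.transpose_def)

lemma s_involutive [simp]: "s k (s k x) = x"
  by (simp add: s_apply)

lemma s_less_s_imp_less_or_swapped:
  assumes "s k a < s k b"
  shows "a < b \<or> (a = Suc k \<and> b = k)"
  using assms by (auto simp: s_apply split: if_splits)

lemma s_permutes:
  assumes "k \<in> {1..n}" "Suc k \<in> {1..n}"
  shows "s k permutes {1..n}"
  unfolding s_def using assms by (intro permutes_swap_id) auto

text \<open>Composing with \<open>s\<^sub>k\<close> on the left swaps the values \<open>k\<close> and \<open>k+1\<close>; if \<open>k\<close>
  occurs before \<open>k+1\<close>, this adds the inversion at their positions and keeps all others.\<close>
lemma len_less_len_s_comp:
  assumes "inj p" "i < j" "i \<in> {1..n}" "j \<in> {1..n}" "p i = k" "p j = Suc k"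
  shows "len n p < len n (s k \<circ> p)"
proof -
  let ?inv = "\<lambda>q. {(a, b). a \<in> {1..n} \<and> b \<in> {1..n} \<and> a < b \<and> q b < q a}"
  have "?inv p \<subseteq> ?inv (s k \<circ> p)"
  proof safe
    fix a b assume ab: "a < b" "p b < p a"
    have "\<not> (p a = Suc k \<and> p b = k)"
      using ab(1) assms(1,2,5,6) by (metis injD less_asym)
    then show "(s k \<circ> p) b < (s k \<circ> p) a"
      using ab(2) by (auto simp: s_apply)
  qed
  moreover have "(i, j) \<in> ?inv (s k \<circ> p)" "(i, j) \<notin> ?inv p"
    using assms by (auto simp: s_apply)
  ultimately have "?inv p \<subset> ?inv (s k \<circ> p)"
    by blast
  moreover have "finite (?inv (s k \<circ> p))"
    by (rule finite_subset[of _ "{1..n} \<times> {1..n}"]) auto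
  ultimately show ?thesis
    unfolding len_def by (simp add: psubset_card_mono)
qed

lemma left_descent_imp_greater_position:
  assumes "inj p" "i \<in> {1..n}" "j \<in> {1..n}" "p i = k" "p j = Suc k"
    and "len n (s k \<circ> p) < len n p"
  shows "j < i"
proof -
  have "i \<noteq> j" using assms(4,5) by auto
  moreover have "\<not> i < j" using len_less_len_s_comp[OF assms(1) _ assms(2-5)] assms(6) by fastforce
  ultimately show ?thesis by simp
qed

lemma bruhat_lt_imp_len_less:
  assumes "bruhat_lt n u v"
  shows "len n u < len n v"
  using assms unfolding bruhat_lt_def
  by (induction rule: trancl_induct) (auto dest: less_trans)

lemma bruhat_lt_comp_reflection:
  assumes "w \<in> sym_grp n" "t \<in> reflections n" "len n w < len n (w \<circ> t)"
  shows "bruhat_lt n w (w \<circ> t)"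
  unfolding bruhat_lt_def using assms by blast

text \<open>The converse of the descent criterion: left multiplication by \<open>s\<^sub>k\<close> equals right
  multiplication by the transposition of the positions of \<open>k\<close> and \<open>k+1\<close>.\<close>
lemma bruhat_lt_s_comp:
  assumes w: "w permutes {1..n}" and "i < j" "i \<in> {1..n}" "j \<in> {1..n}"
    and "w i = Suc k" "w j = k"
  shows "bruhat_lt n (s k \<circ> w) w"
proof -
  let ?u = "s k \<circ> w" and ?t = "Transposition.transpose i j"
  have "k \<in> {1..n}" "Suc k \<in> {1..n}"
    using assms permutes_in_image[OF w] by metis+
  then have u: "?u \<in> sym_grp n"
    using permutes_compose[OF w s_permutes] by simp
  have t: "?t \<in> reflections n"
    unfolding reflections_def using assms by blast
  have ut: "?u \<circ> ?t = w"
  proof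
    fix x
    have "x \<noteq> i \<Longrightarrow> x \<noteq> j \<Longrightarrow> w x \<noteq> k \<and> w x \<noteq> Suc k"
      using assms permutes_inj[OF w] by (metis injD)
    then show "(?u \<circ> ?t) x = w x"
      using assms by (auto simp: s_apply Transposition.transpose_def)
  qed
  have "len n ?u < len n (s k \<circ> ?u)"
    using assms permutes_inj[OF w]
    by (intro len_less_len_s_comp[of _ i j]) (auto simp: inj_compose s_def)
  also have "s k \<circ> ?u = ?u \<circ> ?t"
    by (simp add: ut fun_eq_iff)
  finally have "bruhat_lt n ?u (?u \<circ> ?t)"
    by (rule bruhat_lt_comp_reflection[OF u t])
  then show ?thesis
    by (simp only: ut)
qed

theorem lemma2p18:
  fixes n c :: nat and w2 :: "nat \<Rightarrow> nat"
  assumes "w2 \<in> sym_grp n"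
    and "1 \<le> c" and "c \<le> n - 2"
    and "w2 \<circ> w2 = id"
    and "len n (s (c+1) \<circ> s c \<circ> w2 \<circ> s c) = len n w2 + 3"
    and "s c \<circ> w2 \<noteq> w2 \<circ> s c"
    and "s (c+1) \<circ> s c \<circ> w2 \<circ> s c = s c \<circ> w2 \<circ> s c \<circ> s (c+1)"
    and "bruhat_lt n (s (c+1) \<circ> w2 \<circ> s c) (w2 \<circ> s c)"
  shows "bruhat_lt n (s (c+1) \<circ> w2) w2"
proof -
  have w2: "w2 permutes {1..n}" using assms(1) by simp
  have invol: "w2 (w2 x) = x" for x using assms(4) by (simp add: fun_eq_iff)
  have "c+1 \<in> {1..n}" "c+2 \<in> {1..n}"
    using assms(2,3) by auto
  then have pos: "w2 (c+1) \<in> {1..n}" "w2 (c+2) \<in> {1..n}"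
    using permutes_in_image[OF w2] by auto
  have "s c (w2 (c+2)) < s c (w2 (c+1))"
  proof (rule left_descent_imp_greater_position)
    show "inj (w2 \<circ> s c)"
      using permutes_inj[OF w2] by (simp add: inj_compose s_def)
    show "s c (w2 (c+1)) \<in> {1..n}" "s c (w2 (c+2)) \<in> {1..n}"
      using pos assms(2,3) by (auto simp: s_apply)
    show "(w2 \<circ> s c) (s c (w2 (c+1))) = c+1" "(w2 \<circ> s c) (s c (w2 (c+2))) = Suc (c+1)"
      by (simp_all add: invol)
    show "len n (s (c+1) \<circ> (w2 \<circ> s c)) < len n (w2 \<circ> s c)"
      using bruhat_lt_imp_len_less[OF assms(8)] by (simp add: comp_assoc)
  qed
  then have "w2 (c+2) < w2 (c+1) \<or> (w2 (c+2) = c+1 \<and> w2 (c+1) = c)"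
    by (simp add: s_less_s_imp_less_or_swapped)
  then have "w2 (c+2) < w2 (c+1)"
    using invol[of "c+2"] by auto
  with pos show ?thesis
    using bruhat_lt_s_comp[OF w2, of "w2 (c+2)" "w2 (c+1)" "c+1"] invol by simp
qed

end
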